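(* Let $\{c_n\}_{n\ge1}$ be a real sequence with $\sum_{n=1}^\infty|c_n|<+\infty$, and for $n\ge1$ let $\varphi_*^{(n)}(x):=\varphi^{(n)}(x)-\frac12$, $x\in[0,1]$. Let $a<b$ be positive integers. Then for every real $\lambda$, $$\int_0^1\exp\left(\lambda\max_{a\le N\le b}\left|\sum_{n=N}^\infty c_n\varphi_*^{(n)}(x)\right|\right)dx\le 8\exp\left\{\frac{\lambda^2}{2}\sum_{n=a}^\infty (c_n)^2\right\}.$$
   Context: The tent map on $[0,1]$ is $\varphi(x)=2x$ for $x\in[0,1/2]$ and $\varphi(x)=2(1-x)$ for $x\in[1/2,1]$; it is extended to $\mathbb{R}$ by $\varphi(x):=\varphi(x-[x])$, and $\varphi^{(n)}$ denotes the $n$-fold iterate of $\varphi$, so that $\varphi^{(n)}(x)=\varphi(2^{n-1}x)$. *)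

theory Defs
  imports "HOL-Analysis.Analysis"
begin

definition tent01 :: "real \<Rightarrow> real" where
  "tent01 x = (if x \<le> 1/2 then 2 * x else 2 * (1 - x))"

definition tent :: "real \<Rightarrow> real" where
  "tent x = tent01 (x - of_int \<lfloor>x\<rfloor>)"

definition tent_iter :: "nat \<Rightarrow> real \<Rightarrow> real" where
  "tent_iter n = (tent ^^ n)"

definition tent_star :: "nat \<Rightarrow> real \<Rightarrow> real" where
  "tent_star n x = tent_iter n x - 1/2"

end

(*
  Write \<phi>_n for the n-th iterate of the tent map.  The tent map preserves Lebesgue measure on
  [0,1] and every u has the two preimages u/2 and 1 - u/2, so conditionally on \<phi>_(N+1) = u the
  value of \<phi>_N is u/2 or 1 - u/2 with probability 1/2 each.  Read backwards in N, the partial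
  sums S_N = \<Sum>_(n=N..K) c_n (\<phi>_n - 1/2) therefore have conditionally symmetric increments
  bounded by |c_N|/2.  Hoeffding's lemma gives \<integral> exp(t S_N) \<le> exp(t^2/8 \<Sum> c_n^2), and
  exp(t S_N / 2) is a backward submartingale, so Doob's L^2 maximal inequality yields
  \<integral> max_N exp(t S_N) \<le> 4 exp(t^2/8 \<Sum> c_n^2).  Bounding exp(\<lambda>|s|) by exp(\<lambda>s) + exp(-\<lambda>s)
  doubles the constant to 8, and the tail beyond K vanishes as K \<rightarrow> \<infinity> by absolute summability.
*)

theory Submission
  imports Defs "HOL-Probability.Hoeffding"
begin

section \<open>The tent map preserves Lebesgue measure\<close>

lemma tent_eq_tent01:
  assumes "x \<in> {0..1}"
  shows "tent x = tent01 x"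
proof (cases "x = 1")
  case False
  with assms have "\<lfloor>x\<rfloor> = 0" by (intro floor_unique) auto
  then show ?thesis by (simp add: tent_def)
qed (simp add: tent_def tent01_def)

lemma tent_in_unit: "x \<in> {0..1} \<Longrightarrow> tent x \<in> {0..1}"
  by (simp add: tent_eq_tent01 tent01_def)

lemma tent_preimages:
  assumes "u \<in> {0..1}"
  shows "tent (u/2) = u" and "tent (1 - u/2) = u"
  using assms by (simp_all add: tent_eq_tent01 tent01_def)

lemma continuous_on_tent: "continuous_on {0..1} tent"
proof -
  have "continuous_on {0..1} (\<lambda>x::real. min (2*x) (2*(1-x)))"
    by (intro continuous_intros)
  then show ?thesis
    by (rule continuous_on_eq) (simp add: tent_eq_tent01 tent01_def min_def)
qed

lemma tent_iter_Suc: "tent_iter (Suc n) x = tent (tent_iter n x)"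
  by (simp add: tent_iter_def)

lemma tent_iter_Suc_right: "tent_iter (Suc n) x = tent_iter n (tent x)"
  by (simp add: tent_iter_def funpow_Suc_right del: funpow.simps)

lemma tent_iter_add: "tent_iter m (tent_iter n x) = tent_iter (m + n) x"
  by (simp add: tent_iter_def funpow_add)

lemma tent_iter_in_unit: "x \<in> {0..1} \<Longrightarrow> tent_iter n x \<in> {0..1}"
  by (induction n) (simp_all add: tent_iter_def tent_in_unit[simplified])

lemma continuous_on_tent_iter: "continuous_on {0..1} (tent_iter n)"
proof (induction n)
  case 0 then show ?case by (simp add: tent_iter_def)
next
  case (Suc n)
  have "continuous_on {0..1} (tent \<circ> tent_iter n)"
    by (intro continuous_on_compose[OF Suc] continuous_on_subset[OF continuous_on_tent])
       (auto intro: tent_iter_in_unit)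
  then show ?case by (simp add: comp_def tent_iter_Suc[abs_def])
qed

lemma continuous_on_comp_tent:
  "continuous_on {0..1} h \<Longrightarrow> continuous_on {0..1} (\<lambda>x. h (tent x))"
  by (rule continuous_on_compose2[OF _ continuous_on_tent]) (auto intro: tent_in_unit)

lemma continuous_on_comp_tent_iter:
  "continuous_on {0..1} h \<Longrightarrow> continuous_on {0..1} (\<lambda>x. h (tent_iter n x))"
  by (rule continuous_on_compose2[OF _ continuous_on_tent_iter]) (auto intro: tent_iter_in_unit)

lemma abs_tent_star_le: "x \<in> {0..1} \<Longrightarrow> \<bar>tent_star n x\<bar> \<le> 1/2"
  using tent_iter_in_unit[of x n] by (auto simp: tent_star_def abs_if)

text \<open>Since \<open>u/2\<close> and \<open>1 - u/2\<close> are the two preimages of \<open>u\<close> under the tent map,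
  \<open>tent_avg k (tent_iter (Suc N) x)\<close> is the conditional expectation of \<open>k (tent_iter N x)\<close>
  given \<open>tent_iter (Suc N) x\<close>.\<close>
definition tent_avg :: "(real \<Rightarrow> real) \<Rightarrow> real \<Rightarrow> real" where
  "tent_avg k u = (k (u/2) + k (1 - u/2)) / 2"

lemma continuous_on_tent_avg:
  assumes k: "continuous_on {0..1} k"
  shows "continuous_on {0..1} (tent_avg k)"
proof -
  have "continuous_on {0..1} (\<lambda>u. k (u/2))"
    by (rule continuous_on_compose2[OF k], intro continuous_intros) auto
  moreover have "continuous_on {0..1} (\<lambda>u. k (1 - u/2))"
    by (rule continuous_on_compose2[OF k], intro continuous_intros) auto
  ultimately show ?thesis
    unfolding tent_avg_def[abs_def] by (intro continuous_intros) auto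
qed

lemma integral_tent_avg:
  fixes F :: "real \<Rightarrow> real"
  assumes F: "continuous_on {0..1} F"
  shows "integral {0..1} (tent_avg F) = integral {0..1} F"
proof -
  have left: "((\<lambda>u. (1/2) *\<^sub>R F (u/2)) has_integral integral {0/2..1/2} F) {0..1}"
    by (rule has_integral_substitution[where c=0 and d=1, OF _ _ _ F])
       (auto intro!: derivative_eq_intros)
  have right: "((\<lambda>u. (-1/2) *\<^sub>R F (1 - u/2)) has_integral
      (integral {1 - 0/2..1 - 1/2} F - integral {1 - 1/2..1 - 0/2} F)) {0..1}"
    by (rule has_integral_substitution_general[where c=0 and d=1 and s="{}", OF _ _ _ F])
       (auto intro!: derivative_eq_intros continuous_on_diff continuous_on_divide)
  have "integral {0..1/2} F + integral {1/2..1} F = integral {0..1} F"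
    by (intro Henstock_Kurzweil_Integration.integral_combine integrable_continuous_interval F) auto
  with has_integral_diff[OF left right]
  have "((\<lambda>u. (F (u/2) + F (1 - u/2)) / 2) has_integral integral {0..1} F) {0..1}"
    by (simp add: field_simps)
  then show ?thesis
    unfolding tent_avg_def[abs_def] by (rule integral_unique)
qed

lemma integral_tent_comp_mult:
  fixes g k :: "real \<Rightarrow> real"
  assumes g: "continuous_on {0..1} g" and k: "continuous_on {0..1} k"
  shows "integral {0..1} (\<lambda>y. g (tent y) * k y) = integral {0..1} (\<lambda>u. g u * tent_avg k u)"
proof -
  have "continuous_on {0..1} (\<lambda>y. g (tent y) * k y)"
    using continuous_on_comp_tent[OF g] k by (rule continuous_on_mult)
  then have "integral {0..1} (\<lambda>y. g (tent y) * k y) =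
      integral {0..1} (tent_avg (\<lambda>y. g (tent y) * k y))"
    by (rule integral_tent_avg[symmetric])
  also have "\<dots> = integral {0..1} (\<lambda>u. g u * tent_avg k u)"
    by (intro integral_cong) (simp add: tent_avg_def tent_preimages algebra_simps)
  finally show ?thesis .
qed

lemma integral_tent_iter_comp:
  fixes h :: "real \<Rightarrow> real"
  assumes "continuous_on {0..1} h"
  shows "integral {0..1} (\<lambda>y. h (tent_iter n y)) = integral {0..1} h"
  using assms
proof (induction n arbitrary: h)
  case (Suc n)
  have "integral {0..1} (\<lambda>y. h (tent_iter (Suc n) y)) =
      integral {0..1} (\<lambda>y. h (tent_iter n (tent y)) * 1)"
    by (simp add: tent_iter_Suc_right)
  also have "\<dots> = integral {0..1} (\<lambda>u. h (tent_iter n u) * tent_avg (\<lambda>_. 1) u)"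
    by (rule integral_tent_comp_mult[OF continuous_on_comp_tent_iter[OF Suc.prems] continuous_on_const])
  also have "\<dots> = integral {0..1} h"
    using Suc by (simp add: tent_avg_def)
  finally show ?case .
qed (simp add: tent_iter_def)

lemma integral_tent_iter_Suc_mult:
  fixes g k :: "real \<Rightarrow> real"
  assumes g: "continuous_on {0..1} g" and k: "continuous_on {0..1} k"
  shows "integral {0..1} (\<lambda>y. g (tent_iter (Suc N) y) * k (tent_iter N y)) =
         integral {0..1} (\<lambda>u. g u * tent_avg k u)"
proof -
  have "continuous_on {0..1} (\<lambda>z. g (tent z) * k z)"
    using continuous_on_comp_tent[OF g] k by (rule continuous_on_mult)
  then have "integral {0..1} (\<lambda>y. (\<lambda>z. g (tent z) * k z) (tent_iter N y)) =
      integral {0..1} (\<lambda>z. g (tent z) * k z)"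
    by (rule integral_tent_iter_comp)
  then show ?thesis
    by (simp add: tent_iter_Suc integral_tent_comp_mult[OF g k])
qed

section \<open>Exponential moments of the partial sums\<close>

text \<open>Shifting the index by \<open>M\<close> exhibits the partial sums from \<open>N \<ge> M\<close> on as functions of
  \<open>tent_iter M x\<close>, i.e. as measurable for the \<open>\<sigma>\<close>-algebra generated by \<open>tent_iter M\<close>.\<close>
definition shifted_tent_sum :: "(nat \<Rightarrow> real) \<Rightarrow> nat \<Rightarrow> nat \<Rightarrow> nat \<Rightarrow> real \<Rightarrow> real" where
  "shifted_tent_sum c M N K u = (\<Sum>n\<in>{N..K}. c n * tent_star (n - M) u)"

abbreviation tent_sum :: "(nat \<Rightarrow> real) \<Rightarrow> nat \<Rightarrow> nat \<Rightarrow> real \<Rightarrow> real" where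
  "tent_sum c N K \<equiv> shifted_tent_sum c 0 N K"

lemma shifted_tent_sum_tent_iter:
  "M \<le> N \<Longrightarrow> shifted_tent_sum c M N K (tent_iter M x) = tent_sum c N K x"
  unfolding shifted_tent_sum_def tent_star_def
  by (intro sum.cong refl) (simp add: tent_iter_add)

lemma continuous_on_shifted_tent_sum: "continuous_on {0..1} (shifted_tent_sum c M N K)"
  unfolding shifted_tent_sum_def[abs_def] tent_star_def
  by (intro continuous_intros continuous_on_tent_iter)

lemma tent_sum_Suc:
  "N \<le> K \<Longrightarrow> tent_sum c N K x = c N * tent_star N x + tent_sum c (Suc N) K x"
  by (simp add: shifted_tent_sum_def sum.atLeast_Suc_atMost)

lemma exp_tent_sum_split:
  assumes "N \<le> K"
  shows "exp (t * tent_sum c N K x) =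
    exp (t * shifted_tent_sum c (Suc N) (Suc N) K (tent_iter (Suc N) x)) *
    exp (t * c N * (tent_iter N x - 1/2))"
  by (simp add: tent_sum_Suc[OF assms] shifted_tent_sum_tent_iter tent_star_def
      algebra_simps flip: exp_add)

lemma cosh_le_exp_square_half: "cosh (x::real) \<le> exp (x\<^sup>2 / 2)"
proof -
  define h where "h = 2 * \<bar>x\<bar>"
  \<comment> \<open>Hoeffding's lemma for the two-point distribution on \<open>{0, h}\<close> with equal weights\<close>
  have "ln ((1 + exp h) / 2) \<le> h\<^sup>2 / 8 + h / 2"
    using Hoeffdings_lemma_aux[of h "1/2"] by (simp add: h_def field_simps)
  moreover have "0 < (1 + exp h) / 2"
    by (simp add: add_pos_pos)
  ultimately have "(1 + exp h) / 2 \<le> exp (h\<^sup>2 / 8 + h / 2)"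
    by (metis exp_le_cancel_iff exp_ln)
  then have "(1 + exp h) / 2 * exp (- h / 2) \<le> exp (h\<^sup>2 / 8 + h / 2) * exp (- h / 2)"
    by (rule mult_right_mono) simp
  then have "cosh (h / 2) \<le> exp (h\<^sup>2 / 8)"
    by (simp add: cosh_def field_simps flip: exp_add)
  moreover have "cosh (h / 2) = cosh x"
    by (simp add: h_def abs_if)
  ultimately show ?thesis
    by (simp add: h_def power_mult_distrib)
qed

lemma tent_avg_exp: "tent_avg (\<lambda>z. exp (t * (z - 1/2))) u = cosh (t * (u - 1) / 2)"
proof -
  have "t * (u/2 - 1/2) = t * (u - 1) / 2" "t * (1 - u/2 - 1/2) = - (t * (u - 1) / 2)"
    by (simp_all add: field_simps)
  then show ?thesis
    by (simp add: tent_avg_def cosh_def)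
qed

lemma tent_avg_exp_le:
  assumes "u \<in> {0..1}"
  shows "tent_avg (\<lambda>z. exp (t * (z - 1/2))) u \<le> exp (t\<^sup>2 / 8)"
proof -
  have "(t * (u - 1) / 2)\<^sup>2 / 2 = t\<^sup>2 / 8 * (u - 1)\<^sup>2"
    by (simp add: power_mult_distrib power_divide)
  also have "\<dots> \<le> t\<^sup>2 / 8"
    using assms by (intro mult_left_le) (auto simp: abs_square_le_1)
  finally show ?thesis
    unfolding tent_avg_exp by (meson cosh_le_exp_square_half exp_le_cancel_iff order_trans)
qed

lemma integral_exp_tent_sum_le:
  assumes "N \<le> Suc K"
  shows "integral {0..1} (\<lambda>x. exp (t * tent_sum c N K x)) \<le> exp (t\<^sup>2 / 8 * (\<Sum>n\<in>{N..K}. (c n)\<^sup>2))"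
  using assms
proof (induction N rule: inc_induct)
  case base
  then show ?case by (simp add: shifted_tent_sum_def)
next
  case (step N)
  then have NK: "N \<le> K" by simp
  define g where "g u = exp (t * shifted_tent_sum c (Suc N) (Suc N) K u)" for u
  define k where "k z = exp (t * c N * (z - 1/2))" for z
  define B where "B = exp ((t * c N)\<^sup>2 / 8)"
  have g: "continuous_on {0..1} g"
    unfolding g_def[abs_def] by (intro continuous_intros continuous_on_shifted_tent_sum)
  have k: "continuous_on {0..1} k"
    unfolding k_def[abs_def] by (intro continuous_intros)
  have "integral {0..1} (\<lambda>x. exp (t * tent_sum c N K x)) =
      integral {0..1} (\<lambda>x. g (tent_iter (Suc N) x) * k (tent_iter N x))"
    by (simp add: g_def k_def exp_tent_sum_split[OF NK])
  also have "\<dots> = integral {0..1} (\<lambda>u. g u * tent_avg k u)"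
    by (rule integral_tent_iter_Suc_mult[OF g k])
  also have "\<dots> \<le> integral {0..1} (\<lambda>u. g u * B)"
    unfolding B_def k_def
    by (intro integral_le integrable_continuous_interval continuous_intros g k
        continuous_on_tent_avg[OF k, unfolded k_def] mult_left_mono tent_avg_exp_le)
       (auto simp: g_def)
  also have "\<dots> = integral {0..1} (\<lambda>x. g (tent_iter (Suc N) x)) * B"
    by (simp add: integral_tent_iter_comp[OF g])
  also have "\<dots> = integral {0..1} (\<lambda>x. exp (t * tent_sum c (Suc N) K x)) * B"
    by (simp add: g_def shifted_tent_sum_tent_iter)
  also have "\<dots> \<le> exp (t\<^sup>2 / 8 * (\<Sum>n\<in>{Suc N..K}. (c n)\<^sup>2)) * B"
    by (intro mult_right_mono step.IH) (auto simp: B_def)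
  also have "\<dots> = exp (t\<^sup>2 / 8 * (\<Sum>n\<in>{N..K}. (c n)\<^sup>2))"
    by (simp add: B_def sum.atLeast_Suc_atMost[OF NK] algebra_simps flip: exp_add)
  finally show ?case .
qed

text \<open>The submartingale property of \<open>exp (t * tent_sum c N K)\<close> in the reversed time \<open>N\<close>,
  tested against a nonnegative function of \<open>tent_iter (Suc N)\<close>.\<close>
lemma integral_exp_tent_sum_submartingale:
  assumes G: "continuous_on {0..1} G" and G_nonneg: "\<And>u. u \<in> {0..1} \<Longrightarrow> 0 \<le> G u"
    and NK: "N \<le> K"
  shows "0 \<le> integral {0..1} (\<lambda>x. G (tent_iter (Suc N) x) *
            (exp (t * tent_sum c N K x) - exp (t * tent_sum c (Suc N) K x)))"
proof -
  define g where "g u = G u * exp (t * shifted_tent_sum c (Suc N) (Suc N) K u)" for u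
  define k where "k z = exp (t * c N * (z - 1/2)) - 1" for z
  have g: "continuous_on {0..1} g"
    unfolding g_def[abs_def] by (intro continuous_intros continuous_on_shifted_tent_sum G)
  have k: "continuous_on {0..1} k"
    unfolding k_def[abs_def] by (intro continuous_intros)
  have "integral {0..1} (\<lambda>x. G (tent_iter (Suc N) x) *
            (exp (t * tent_sum c N K x) - exp (t * tent_sum c (Suc N) K x))) =
        integral {0..1} (\<lambda>x. g (tent_iter (Suc N) x) * k (tent_iter N x))"
    by (simp add: g_def k_def exp_tent_sum_split[OF NK] shifted_tent_sum_tent_iter
        algebra_simps)
  also have "\<dots> = integral {0..1} (\<lambda>u. g u * tent_avg k u)"
    by (rule integral_tent_iter_Suc_mult[OF g k])
  also have "0 \<le> \<dots>"
  proof (intro integral_nonneg integrable_continuous_interval continuous_intros g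
      continuous_on_tent_avg k)
    fix u :: real assume "u \<in> {0..1}"
    moreover have "tent_avg k u = cosh (t * c N * (u - 1) / 2) - 1"
      using tent_avg_exp[of "t * c N" u] by (simp add: tent_avg_def k_def)
    ultimately show "0 \<le> g u * tent_avg k u"
      by (simp add: g_def G_nonneg cosh_real_ge_1)
  qed
  finally show ?thesis .
qed

section \<open>Doob's maximal inequality\<close>

lemma continuous_on_Max:
  fixes f :: "'i \<Rightarrow> 'a::topological_space \<Rightarrow> 'b::linorder_topology"
  assumes "finite J" "J \<noteq> {}" "\<And>j. j \<in> J \<Longrightarrow> continuous_on S (f j)"
  shows "continuous_on S (\<lambda>x. Max ((\<lambda>j. f j x) ` J))"
  using assms
proof (induction J rule: finite_ne_induct)
  case (insert j J)
  then have "continuous_on S (\<lambda>x. max (f j x) (Max ((\<lambda>j. f j x) ` J)))"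
    by (intro continuous_on_max) auto
  with insert show ?case by simp
qed simp

lemma Max_image_power2:
  fixes f :: "'i \<Rightarrow> real"
  assumes "finite A" "A \<noteq> {}" "\<And>j. j \<in> A \<Longrightarrow> 0 \<le> f j"
  shows "Max ((\<lambda>j. (f j)\<^sup>2) ` A) = (Max (f ` A))\<^sup>2"
proof -
  have "Max (f ` A) \<in> f ` A"
    using assms by (intro Max_in) auto
  then obtain j0 where j0: "j0 \<in> A" "Max (f ` A) = f j0"
    by auto
  show ?thesis
  proof (rule Max_eqI)
    fix y assume "y \<in> (\<lambda>j. (f j)\<^sup>2) ` A"
    then obtain j where "j \<in> A" "y = (f j)\<^sup>2" by auto
    moreover have "f j \<le> f j0"
      using j0 \<open>j \<in> A\<close> assms(1) by (metis Max_ge finite_imageI image_eqI)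
    ultimately show "y \<le> (Max (f ` A))\<^sup>2"
      using j0 assms(3) by (simp add: power_mono)
  qed (use assms j0 in auto)
qed

text \<open>A pathwise form of Doob's \<open>L\<^sup>2\<close> maximal inequality for the path run backwards from
  \<open>b\<close> to \<open>a\<close>; for a submartingale the integral of the sum is nonnegative.\<close>
lemma Max_power2_le_doob_pathwise:
  fixes x :: "nat \<Rightarrow> real"
  assumes "a \<le> b"
  shows "(Max (x ` {a..b}))\<^sup>2 \<le>
    4 * (x a)\<^sup>2 - 4 * (\<Sum>N\<in>{a..<b}. Max (x ` {Suc N..b}) * (x N - x (Suc N)))"
proof -
  define M where "M N = Max (x ` {N..b})" for N
  \<comment> \<open>\<open>F N + (2 * x N - M N)\<^sup>2\<close> is the slack of the inequality started at \<open>N\<close>\<close>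
  define F where
    "F N = 2 * M N * (2 * x N - M N) - 4 * (\<Sum>j\<in>{N..<b}. M (Suc j) * (x j - x (Suc j)))" for N
  have "0 \<le> F a"
    using assms
  proof (induction a rule: inc_induct)
    case base
    then show ?case by (simp add: F_def M_def)
  next
    case (step n)
    have "{n..b} = insert n {Suc n..b}"
      using step(2) by auto
    then have Mn: "M n = max (x n) (M (Suc n))"
      using step(2) by (simp add: M_def)
    have "F n = F (Suc n) + (4 * M n * x n - 2 * (M n)\<^sup>2 + 2 * (M (Suc n))\<^sup>2 - 4 * M (Suc n) * x n)"
      using step(2) by (simp add: F_def sum.atLeast_Suc_lessThan algebra_simps power2_eq_square)
    moreover have "0 \<le> 4 * M n * x n - 2 * (M n)\<^sup>2 + 2 * (M (Suc n))\<^sup>2 - 4 * M (Suc n) * x n"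
    proof (cases "x n \<le> M (Suc n)")
      case False
      then have "M n = x n" by (simp add: Mn)
      moreover have "0 \<le> 2 * (x n - M (Suc n))\<^sup>2" by simp
      ultimately show ?thesis by (simp add: power2_eq_square algebra_simps)
    qed (simp add: Mn max_def)
    ultimately show ?case
      using step.IH by linarith
  qed
  moreover have "4 * (x a)\<^sup>2 - 4 * (\<Sum>N\<in>{a..<b}. M (Suc N) * (x N - x (Suc N))) - (M a)\<^sup>2
      = F a + (2 * x a - M a)\<^sup>2"
    by (simp add: F_def power2_eq_square algebra_simps)
  moreover have "0 \<le> (2 * x a - M a)\<^sup>2"
    by simp
  ultimately show ?thesis
    unfolding M_def by linarith
qed

lemma integral_Max_exp_tent_sum_increment_nonneg:
  assumes "N < b" and "b \<le> K"
  shows "0 \<le> integral {0..1} (\<lambda>x. Max ((\<lambda>j. exp (t * tent_sum c j K x)) ` {Suc N..b}) *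
            (exp (t * tent_sum c N K x) - exp (t * tent_sum c (Suc N) K x)))"
proof -
  define G where "G u = Max ((\<lambda>j. exp (t * shifted_tent_sum c (Suc N) j K u)) ` {Suc N..b})" for u
  have "continuous_on {0..1} G"
    unfolding G_def[abs_def] using assms
    by (intro continuous_intros continuous_on_Max continuous_on_shifted_tent_sum) auto
  moreover have "0 \<le> G u" for u
  proof -
    have "exp (t * shifted_tent_sum c (Suc N) b K u) \<le> G u"
      unfolding G_def using assms by (intro Max_ge) auto
    then show ?thesis
      by (rule order_trans[OF exp_ge_zero])
  qed
  moreover have "Max ((\<lambda>j. exp (t * tent_sum c j K x)) ` {Suc N..b}) = G (tent_iter (Suc N) x)" for x
    by (simp add: G_def shifted_tent_sum_tent_iter image_image)
  ultimately show ?thesis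
    using assms by (simp add: integral_exp_tent_sum_submartingale)
qed

lemma integral_Max_exp_tent_sum_le:
  assumes ab: "a \<le> b" and bK: "b \<le> K"
  shows "integral {0..1} (\<lambda>x. Max ((\<lambda>N. exp (t * tent_sum c N K x)) ` {a..b}))
         \<le> 4 * exp (t\<^sup>2 / 8 * (\<Sum>n\<in>{a..K}. (c n)\<^sup>2))"
proof -
  define Y where "Y N x = exp (t / 2 * tent_sum c N K x)" for N x
  define D where "D N x = Max ((\<lambda>j. Y j x) ` {Suc N..b}) * (Y N x - Y (Suc N) x)" for N x
  have exp_eq_Y_sq: "exp (t * tent_sum c N K x) = (Y N x)\<^sup>2" for N x
    by (simp add: Y_def power2_eq_square flip: exp_add)
  have Y: "continuous_on {0..1} (Y N)" for N
    unfolding Y_def[abs_def] by (intro continuous_intros continuous_on_shifted_tent_sum)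
  have D: "continuous_on {0..1} (D N)" if "N < b" for N
    unfolding D_def[abs_def] using that by (intro continuous_intros continuous_on_Max Y) auto
  have D_nonneg: "0 \<le> integral {0..1} (D N)" if "N < b" for N
    unfolding D_def Y_def using that bK by (rule integral_Max_exp_tent_sum_increment_nonneg)
  have pointwise: "Max ((\<lambda>N. exp (t * tent_sum c N K x)) ` {a..b})
      \<le> 4 * (Y a x)\<^sup>2 - 4 * (\<Sum>N\<in>{a..<b}. D N x)" for x
  proof -
    have "Max ((\<lambda>N. exp (t * tent_sum c N K x)) ` {a..b}) = (Max ((\<lambda>N. Y N x) ` {a..b}))\<^sup>2"
      unfolding exp_eq_Y_sq using ab by (intro Max_image_power2) (auto simp: Y_def)
    also have "\<dots> \<le> 4 * (Y a x)\<^sup>2 - 4 * (\<Sum>N\<in>{a..<b}. D N x)"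
      unfolding D_def using Max_power2_le_doob_pathwise[OF ab] by simp
    finally show ?thesis .
  qed
  have "integral {0..1} (\<lambda>x. Max ((\<lambda>N. exp (t * tent_sum c N K x)) ` {a..b}))
      \<le> integral {0..1} (\<lambda>x. 4 * (Y a x)\<^sup>2 - 4 * (\<Sum>N\<in>{a..<b}. D N x))"
    using ab by (intro integral_le integrable_continuous_interval continuous_intros continuous_on_Max
        continuous_on_shifted_tent_sum Y D pointwise) auto
  also have "\<dots> = 4 * integral {0..1} (\<lambda>x. exp (t * tent_sum c a K x))
      - 4 * (\<Sum>N\<in>{a..<b}. integral {0..1} (D N))"
  proof -
    have "(\<lambda>x. 4 * (Y a x)\<^sup>2) integrable_on {0..1}"
      by (intro integrable_continuous_interval continuous_intros Y)
    moreover have "(\<lambda>x. 4 * (\<Sum>N\<in>{a..<b}. D N x)) integrable_on {0..1}"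
      by (intro integrable_continuous_interval continuous_intros D) auto
    moreover have "integral {0..1} (\<lambda>x. \<Sum>N\<in>{a..<b}. D N x) = (\<Sum>N\<in>{a..<b}. integral {0..1} (D N))"
      by (intro integral_sum integrable_continuous_interval D) auto
    ultimately show ?thesis
      by (simp add: integral_diff exp_eq_Y_sq)
  qed
  also have "\<dots> \<le> 4 * integral {0..1} (\<lambda>x. exp (t * tent_sum c a K x))"
    using D_nonneg by (auto intro!: sum_nonneg)
  also have "\<dots> \<le> 4 * exp (t\<^sup>2 / 8 * (\<Sum>n\<in>{a..K}. (c n)\<^sup>2))"
    using ab bK by (intro mult_left_mono integral_exp_tent_sum_le) auto
  finally show ?thesis .
qed

section \<open>Passing to the infinite series\<close>

lemma summable_power2_if_summable_abs:
  fixes c :: "nat \<Rightarrow> real"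
  assumes "summable (\<lambda>n. \<bar>c n\<bar>)"
  shows "summable (\<lambda>n. (c n)\<^sup>2)"
proof (rule summable_comparison_test_ev[OF _ assms])
  have "eventually (\<lambda>n. \<bar>c n\<bar> < 1) sequentially"
    using summable_LIMSEQ_zero[OF assms] by (rule order_tendstoD) simp
  then show "eventually (\<lambda>n. norm ((c n)\<^sup>2) \<le> \<bar>c n\<bar>) sequentially"
  proof eventually_elim
    case (elim n)
    then have "\<bar>c n\<bar> * \<bar>c n\<bar> \<le> \<bar>c n\<bar>"
      by (intro mult_left_le_one_le) auto
    then show ?case
      by (simp add: power2_eq_square abs_mult)
  qed
qed

lemma
  fixes c f :: "nat \<Rightarrow> real"
  assumes c: "summable (\<lambda>n. \<bar>c n\<bar>)" and f: "\<And>n. \<bar>f n\<bar> \<le> 1"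
  shows summable_mult_bounded: "summable (\<lambda>n. c n * f n)"
    and abs_suminf_mult_bounded_le: "\<bar>\<Sum>n. c n * f n\<bar> \<le> (\<Sum>n. \<bar>c n\<bar>)"
proof -
  have le: "\<bar>c n * f n\<bar> \<le> \<bar>c n\<bar>" for n
    using f[of n] by (simp add: abs_mult mult_left_le)
  then have abs_summable: "summable (\<lambda>n. \<bar>c n * f n\<bar>)"
    by (intro summable_comparison_test'[OF c]) simp
  then show "summable (\<lambda>n. c n * f n)"
    by (rule summable_rabs_cancel)
  have "\<bar>\<Sum>n. c n * f n\<bar> \<le> (\<Sum>n. \<bar>c n * f n\<bar>)"
    by (rule summable_rabs[OF abs_summable])
  also have "\<dots> \<le> (\<Sum>n. \<bar>c n\<bar>)"
    by (rule suminf_le[OF le abs_summable c])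
  finally show "\<bar>\<Sum>n. c n * f n\<bar> \<le> (\<Sum>n. \<bar>c n\<bar>)" .
qed

lemma suminf_split_at:
  fixes f :: "nat \<Rightarrow> 'a::real_normed_vector"
  assumes "summable f" and "N \<le> Suc K"
  shows "(\<Sum>n. f (n + N)) = (\<Sum>n\<in>{N..K}. f n) + (\<Sum>n. f (n + Suc K))"
proof -
  have "(\<Sum>n. f (n + N)) = (\<Sum>n. f (n + (Suc K - N) + N)) + (\<Sum>i<Suc K - N. f (i + N))"
    using assms(1) by (intro suminf_split_initial_segment summable_ignore_initial_segment)
  also have "(\<lambda>n. f (n + (Suc K - N) + N)) = (\<lambda>n. f (n + Suc K))"
    using assms(2) by simp
  also have "(\<Sum>i<Suc K - N. f (i + N)) = (\<Sum>n\<in>{N..K}. f n)"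
    using assms(2) sum.shift_bounds_nat_ivl[of f 0 N "Suc K - N"]
    by (simp add: lessThan_atLeast0 atLeastLessThanSuc_atLeastAtMost)
  finally show ?thesis
    by (simp add: add.commute)
qed

lemma exp_mult_abs_le: "exp (lam * \<bar>t\<bar>) \<le> exp (lam * t) + exp (- lam * t)" for lam t :: real
  by (cases "0 \<le> t") (auto intro: add_increasing add_increasing2)

lemma abs_tent_series_minus_tent_sum_le:
  assumes c: "summable (\<lambda>n. \<bar>c n\<bar>)" and x: "x \<in> {0..1}" and "N \<le> Suc K"
  shows "\<bar>(\<Sum>n. c (n + N) * tent_star (n + N) x) - tent_sum c N K x\<bar> \<le> (\<Sum>n. \<bar>c (n + Suc K)\<bar>)"
proof -
  have tent_star_le: "\<bar>tent_star n x\<bar> \<le> 1" for n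
    using abs_tent_star_le[OF x, of n] by simp
  have "(\<Sum>n. c (n + N) * tent_star (n + N) x) =
      tent_sum c N K x + (\<Sum>n. c (n + Suc K) * tent_star (n + Suc K) x)"
    unfolding shifted_tent_sum_def diff_zero using assms(3)
    by (intro suminf_split_at[of "\<lambda>n. c n * tent_star n x"] summable_mult_bounded[OF c tent_star_le])
  moreover have "\<bar>\<Sum>n. c (n + Suc K) * tent_star (n + Suc K) x\<bar> \<le> (\<Sum>n. \<bar>c (n + Suc K)\<bar>)"
    using c by (intro abs_suminf_mult_bounded_le tent_star_le summable_ignore_initial_segment)
  ultimately show ?thesis
    by simp
qed

lemma exp_Max_abs_tent_series_le:
  assumes c: "summable (\<lambda>n. \<bar>c n\<bar>)" and x: "x \<in> {0..1}" and "a \<le> b" "b \<le> K"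
  shows "exp (lam * Max ((\<lambda>N. \<bar>\<Sum>n. c (n + N) * tent_star (n + N) x\<bar>) ` {a..b}))
    \<le> exp (\<bar>lam\<bar> * (\<Sum>n. \<bar>c (n + Suc K)\<bar>)) *
      (Max ((\<lambda>N. exp (lam * tent_sum c N K x)) ` {a..b}) +
       Max ((\<lambda>N. exp (- lam * tent_sum c N K x)) ` {a..b}))"
proof -
  define T where "T N = (\<Sum>n. c (n + N) * tent_star (n + N) x)" for N
  define R where "R = (\<Sum>n. \<bar>c (n + Suc K)\<bar>)"
  have "Max ((\<lambda>N. \<bar>T N\<bar>) ` {a..b}) \<in> (\<lambda>N. \<bar>T N\<bar>) ` {a..b}"
    using assms by (intro Max_in) auto
  then obtain N where N: "N \<in> {a..b}" "Max ((\<lambda>N. \<bar>T N\<bar>) ` {a..b}) = \<bar>T N\<bar>"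
    by auto
  have "\<bar>T N - tent_sum c N K x\<bar> \<le> R"
    unfolding T_def R_def using N assms by (intro abs_tent_series_minus_tent_sum_le) auto
  then have "lam * (\<bar>T N\<bar> - \<bar>tent_sum c N K x\<bar>) \<le> \<bar>lam\<bar> * R"
    by (metis abs_ge_self abs_mult abs_ge_zero abs_triangle_ineq3 mult_left_mono order_trans)
  then have "exp (lam * \<bar>T N\<bar>) \<le> exp (\<bar>lam\<bar> * R) * exp (lam * \<bar>tent_sum c N K x\<bar>)"
    by (simp add: algebra_simps flip: exp_add)
  also have "\<dots> \<le> exp (\<bar>lam\<bar> * R) *
      (exp (lam * tent_sum c N K x) + exp (- lam * tent_sum c N K x))"
    by (intro mult_left_mono exp_mult_abs_le) simp
  also have "\<dots> \<le> exp (\<bar>lam\<bar> * R) *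
      (Max ((\<lambda>N. exp (lam * tent_sum c N K x)) ` {a..b}) +
       Max ((\<lambda>N. exp (- lam * tent_sum c N K x)) ` {a..b}))"
    using N(1) by (intro mult_left_mono add_mono Max_ge) auto
  finally show ?thesis
    unfolding T_def R_def N(2)[unfolded T_def] .
qed

lemma sum_power2_le_suminf_shift:
  fixes c :: "nat \<Rightarrow> real"
  assumes "summable (\<lambda>n. \<bar>c n\<bar>)" and "a \<le> Suc K"
  shows "(\<Sum>n\<in>{a..K}. (c n)\<^sup>2) \<le> (\<Sum>n. (c (n + a))\<^sup>2)"
proof -
  have squares: "summable (\<lambda>n. (c n)\<^sup>2)"
    using assms(1) by (rule summable_power2_if_summable_abs)
  have "0 \<le> (\<Sum>n. (c (n + Suc K))\<^sup>2)"
    by (intro suminf_nonneg summable_ignore_initial_segment[OF squares]) simp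
  with suminf_split_at[OF squares assms(2)] show ?thesis
    by linarith
qed

lemma integral_Max_exp_tent_sum_plus_minus_le:
  assumes ab: "a \<le> b" and bK: "b \<le> K" and c: "summable (\<lambda>n. \<bar>c n\<bar>)"
  shows "integral {0..1} (\<lambda>x. Max ((\<lambda>N. exp (lam * tent_sum c N K x)) ` {a..b}) +
                               Max ((\<lambda>N. exp (- lam * tent_sum c N K x)) ` {a..b}))
         \<le> 8 * exp (lam\<^sup>2 / 2 * (\<Sum>n. (c (n + a))\<^sup>2))"
proof -
  define H where "H t x = Max ((\<lambda>N. exp (t * tent_sum c N K x)) ` {a..b})" for t x
  have "continuous_on {0..1} (H t)" for t
    unfolding H_def[abs_def] using ab
    by (intro continuous_on_Max continuous_intros continuous_on_shifted_tent_sum) auto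
  then have "integral {0..1} (\<lambda>x. H lam x + H (- lam) x) =
      integral {0..1} (H lam) + integral {0..1} (H (- lam))"
    by (simp add: integral_add integrable_continuous_interval)
  also have "\<dots> \<le> 8 * exp (lam\<^sup>2 / 8 * (\<Sum>n\<in>{a..K}. (c n)\<^sup>2))"
    using integral_Max_exp_tent_sum_le[OF ab bK, of lam c]
      integral_Max_exp_tent_sum_le[OF ab bK, of "- lam" c]
    by (simp add: H_def[abs_def])
  also have "\<dots> \<le> 8 * exp (lam\<^sup>2 / 2 * (\<Sum>n. (c (n + a))\<^sup>2))"
  proof -
    have "lam\<^sup>2 / 8 * (\<Sum>n\<in>{a..K}. (c n)\<^sup>2) \<le> lam\<^sup>2 / 2 * (\<Sum>n. (c (n + a))\<^sup>2)"
      using sum_power2_le_suminf_shift[OF c, of a K] ab bK by (intro mult_mono sum_nonneg) auto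
    then show ?thesis
      by simp
  qed
  finally show ?thesis
    by (simp add: H_def)
qed

lemma integral_exp_Max_abs_tent_series_le:
  assumes c: "summable (\<lambda>n. \<bar>c n\<bar>)" and ab: "a \<le> b" and bK: "b \<le> K"
  shows "(LINT x:{0..1}|lborel.
            exp (lam * Max ((\<lambda>N. \<bar>\<Sum>n. c (n + N) * tent_star (n + N) x\<bar>) ` {a..b})))
    \<le> exp (\<bar>lam\<bar> * (\<Sum>n. \<bar>c (n + Suc K)\<bar>)) * (8 * exp (lam\<^sup>2 / 2 * (\<Sum>n. (c (n + a))\<^sup>2)))"
proof -
  define F where
    "F x = exp (lam * Max ((\<lambda>N. \<bar>\<Sum>n. c (n + N) * tent_star (n + N) x\<bar>) ` {a..b}))" for x
  define E where "E = exp (\<bar>lam\<bar> * (\<Sum>n. \<bar>c (n + Suc K)\<bar>))"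
  define H where "H x = Max ((\<lambda>N. exp (lam * tent_sum c N K x)) ` {a..b}) +
                        Max ((\<lambda>N. exp (- lam * tent_sum c N K x)) ` {a..b})" for x
  have EH: "set_integrable lborel {0..1} (\<lambda>x. E * H x)"
    unfolding H_def using ab
    by (intro borel_integrable_atLeastAtMost' continuous_intros continuous_on_Max
        continuous_on_shifted_tent_sum) auto
  show ?thesis
  proof (cases "set_integrable lborel {0..1} F")
    case True
    have "(LINT x:{0..1}|lborel. F x) \<le> (LINT x:{0..1}|lborel. E * H x)"
      using exp_Max_abs_tent_series_le[OF c _ ab bK]
      by (intro set_integral_mono[OF True EH]) (simp add: F_def E_def H_def)
    also have "\<dots> = E * integral {0..1} H"
      using set_borel_integral_eq_integral(2)[OF EH] by simp
    also have "\<dots> \<le> E * (8 * exp (lam\<^sup>2 / 2 * (\<Sum>n. (c (n + a))\<^sup>2)))"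
      unfolding H_def E_def using integral_Max_exp_tent_sum_plus_minus_le[OF ab bK c]
      by (intro mult_left_mono) auto
    finally show ?thesis
      by (simp only: F_def E_def)
  next
    case False
    \<comment> \<open>The Lebesgue integral of a non-integrable function is \<open>0\<close> by convention.\<close>
    then have "(LINT x:{0..1}|lborel. F x) = 0"
      by (simp add: set_lebesgue_integral_def set_integrable_def not_integrable_integral_eq)
    then show ?thesis
      by (simp add: F_def)
  qed
qed

theorem lemma2p7:
  fixes c :: "nat \<Rightarrow> real" and a b :: nat and lam :: real
  assumes "summable (\<lambda>n. \<bar>c n\<bar>)"
    and "1 \<le> a" and "a < b"
  shows "(LINT x:{0..1}|lborel.
            exp (lam * Max ((\<lambda>N. \<bar>\<Sum>n. c (n + N) * tent_star (n + N) x\<bar>) ` {a..b})))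
         \<le> 8 * exp (lam\<^sup>2 / 2 * (\<Sum>n. (c (n + a))\<^sup>2))"
proof -
  define B where "B = 8 * exp (lam\<^sup>2 / 2 * (\<Sum>n. (c (n + a))\<^sup>2))"
  define tail where "tail K = (\<Sum>n. \<bar>c (n + Suc K)\<bar>)" for K
  have "tail \<longlonglongrightarrow> 0"
    unfolding tail_def using LIMSEQ_Suc[OF suminf_exist_split2[OF assms(1)]] by simp
  then have "(\<lambda>K. exp (\<bar>lam\<bar> * tail K) * B) \<longlonglongrightarrow> exp (\<bar>lam\<bar> * 0) * B"
    by (intro tendsto_intros)
  moreover have "(LINT x:{0..1}|lborel.
            exp (lam * Max ((\<lambda>N. \<bar>\<Sum>n. c (n + N) * tent_star (n + N) x\<bar>) ` {a..b})))
      \<le> exp (\<bar>lam\<bar> * tail K) * B" if "b \<le> K" for K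
    unfolding tail_def B_def using assms(3) that
    by (intro integral_exp_Max_abs_tent_series_le[OF assms(1)]) auto
  ultimately show ?thesis
    unfolding B_def by (intro LIMSEQ_le_const) auto
qed

end
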